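(* Let $A$ be a simple hyperbolic $d$-arrangement of $n$ hyperplanes in $\mathbb{H}^k$. Then the concept class $C\subseteq\{0,1\}^n$ corresponding to $A$ is a maximum class of VC-dimension $d$ in the $n$-cube.
   Context: $\mathbb{H}^k$ is the Klein model of hyperbolic space: the open unit ball in $\mathbb{R}^k$, whose hyperbolic planes are the nonempty intersections of affine planes of $\mathbb{R}^k$ with the open ball. A simple hyperbolic $d$-arrangement is a collection of $n$ oriented hyperbolic hyperplanes in $\mathbb{H}^k$ such that every sub-collection of $d$ of them mutually intersects in a $(k-d)$-dimensional hyperbolic plane and every sub-collection of $d+1$ of them has empty mutual intersection. Each cell of the complement gives the concept in $\{0,1\}^n$ whose $i$-th coordinate records the side of the $i$-th hyperplane containing the cell; $C$ is the set of these concepts. $C$ is maximum of VC-dimension $d$ if its VC-dimension is $d$ and $|C|=\sum_{i=0}^d\binom{n}{i}$. *)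

theory Defs
  imports "HOL-Analysis.Analysis"
begin

text \<open>Klein model: the open unit ball of a Euclidean space 'a (k = DIM('a)).\<close>

definition klein :: "'a::euclidean_space set" where
  "klein = ball 0 1"

definition hplane :: "'a::euclidean_space \<times> real \<Rightarrow> 'a set" where
  "hplane h = {x. fst h \<bullet> x = snd h}"

definition pos_side :: "'a::euclidean_space \<times> real \<Rightarrow> 'a set" where
  "pos_side h = {x. fst h \<bullet> x > snd h}"

definition hyperbolic_plane :: "int \<Rightarrow> 'a::euclidean_space set \<Rightarrow> bool" where
  "hyperbolic_plane m P \<longleftrightarrow>
     (\<exists>A. affine A \<and> aff_dim A = m \<and> P = A \<inter> klein \<and> P \<noteq> {})"

definition hyp_hyperplane :: "'a::euclidean_space \<times> real \<Rightarrow> bool" where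
  "hyp_hyperplane h \<longleftrightarrow> fst h \<noteq> 0 \<and> hplane h \<inter> klein \<noteq> {}"

definition simple_hyp_arrangement ::
    "nat \<Rightarrow> nat \<Rightarrow> (nat \<Rightarrow> 'a::euclidean_space \<times> real) \<Rightarrow> bool" where
  "simple_hyp_arrangement d n h \<longleftrightarrow>
     (\<forall>i<n. hyp_hyperplane (h i)) \<and>
     (\<forall>I. I \<subseteq> {..<n} \<and> card I = d \<longrightarrow>
        hyperbolic_plane (int DIM('a) - int d) ((\<Inter>i\<in>I. hplane (h i)) \<inter> klein)) \<and>
     (\<forall>I. I \<subseteq> {..<n} \<and> card I = Suc d \<longrightarrow>
        (\<Inter>i\<in>I. hplane (h i)) \<inter> klein = {})"

definition cells :: "nat \<Rightarrow> (nat \<Rightarrow> 'a::euclidean_space \<times> real) \<Rightarrow> 'a set set" where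
  "cells n h = components (klein - (\<Union>i<n. hplane (h i)))"

text \<open>A concept in {0,1}^n is represented as the set of coordinates equal to 1.\<close>
definition cell_concept :: "nat \<Rightarrow> (nat \<Rightarrow> 'a::euclidean_space \<times> real) \<Rightarrow> 'a set \<Rightarrow> nat set" where
  "cell_concept n h c = {i. i < n \<and> c \<subseteq> pos_side (h i)}"

definition concept_class :: "nat \<Rightarrow> (nat \<Rightarrow> 'a::euclidean_space \<times> real) \<Rightarrow> nat set set" where
  "concept_class n h = cell_concept n h ` cells n h"

definition shatters :: "nat set set \<Rightarrow> nat set \<Rightarrow> bool" where
  "shatters C S \<longleftrightarrow> (\<lambda>c. c \<inter> S) ` C = Pow S"

definition has_VC_dim :: "nat \<Rightarrow> nat set set \<Rightarrow> nat \<Rightarrow> bool" where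
  "has_VC_dim n C d \<longleftrightarrow>
     (\<exists>S. S \<subseteq> {..<n} \<and> card S = d \<and> shatters C S) \<and>
     (\<forall>S. S \<subseteq> {..<n} \<and> shatters C S \<longrightarrow> card S \<le> d)"

definition maximum_class :: "nat \<Rightarrow> nat set set \<Rightarrow> nat \<Rightarrow> bool" where
  "maximum_class n C d \<longleftrightarrow>
     C \<subseteq> Pow {..<n} \<and> has_VC_dim n C d \<and> card C = (\<Sum>i\<le>d. n choose i)"

end

theory Submission
  imports Defs
begin

text \<open>Cells are identified by their sign patterns. In a convex open region \<open>K\<close> of an affine flat
  \<open>L\<close>, adding a hyperplane \<open>H\<close> to an arrangement splits exactly those cells that meet \<open>H\<close>, and
  these correspond to the cells of the arrangement induced on \<open>K \<inter> H\<close>. Simplicity of dimension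
  \<open>d\<close> passes to that restriction with \<open>d - 1\<close>, so the number of cells of \<open>m\<close> hyperplanes obeys
  the recurrence \<open>\<Phi>(d, m + 1) = \<Phi>(d, m) + \<Phi>(d - 1, m)\<close> of \<open>\<Phi>(d, m) = (\<Sum>i\<le>d. m choose i)\<close>.
  Applied to any \<open>d\<close> of the hyperplanes the count is \<open>2\<^sup>d\<close>, so they are shattered. Conversely,
  if \<open>d + 1\<close> hyperplanes were shattered, connecting the two cells on either side of one of them
  inside the convex ball would, inductively, produce a common point of all of them in the ball.\<close>

definition neg_side :: "'a::euclidean_space \<times> real \<Rightarrow> 'a set" where
  "neg_side h = {x. fst h \<bullet> x < snd h}"

definition sign_cell :: "(nat \<Rightarrow> 'a::euclidean_space \<times> real) \<Rightarrow> nat set \<Rightarrow> nat set \<Rightarrow> 'a set" where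
  "sign_cell h F T = (\<Inter>i\<in>F. if i \<in> T then pos_side (h i) else neg_side (h i))"

definition realized_patterns :: "(nat \<Rightarrow> 'a::euclidean_space \<times> real) \<Rightarrow> 'a set \<Rightarrow> nat set \<Rightarrow> nat set set" where
  "realized_patterns h K F = {T. T \<subseteq> F \<and> K \<inter> sign_cell h F T \<noteq> {}}"

lemma mem_sign_cell:
  "x \<in> sign_cell h F T \<longleftrightarrow>
    (\<forall>i\<in>F. if i \<in> T then snd (h i) < fst (h i) \<bullet> x else fst (h i) \<bullet> x < snd (h i))"
  unfolding sign_cell_def pos_side_def neg_side_def by auto

lemma sign_cell_cong: "(\<And>i. i \<in> F \<Longrightarrow> i \<in> T \<longleftrightarrow> i \<in> T') \<Longrightarrow> sign_cell h F T = sign_cell h F T'"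
  unfolding sign_cell_def by auto

lemma sign_cell_insert:
  "sign_cell h (insert j F) T = sign_cell h F T \<inter> (if j \<in> T then pos_side (h j) else neg_side (h j))"
  unfolding sign_cell_def by auto

lemma sign_cell_antimono: "F \<subseteq> G \<Longrightarrow> sign_cell h G T \<subseteq> sign_cell h F T"
  unfolding sign_cell_def by auto

lemma convex_sign_cell: "convex (sign_cell h F T)"
  unfolding sign_cell_def pos_side_def neg_side_def
  by (intro convex_INT) (auto intro: convex_halfspace_lt convex_halfspace_gt)

lemma open_sign_cell: "finite F \<Longrightarrow> open (sign_cell h F T)"
  unfolding sign_cell_def pos_side_def neg_side_def
  by (intro open_INT) (auto intro: open_halfspace_lt open_halfspace_gt)

lemma sign_cell_pattern: "x \<in> sign_cell h F T \<Longrightarrow> T \<inter> F = {i\<in>F. x \<in> pos_side (h i)}"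
  unfolding mem_sign_cell pos_side_def by (auto split: if_splits)

lemma mem_sign_cell_pattern:
  "(\<And>i. i \<in> F \<Longrightarrow> x \<notin> hplane (h i)) \<Longrightarrow> x \<in> sign_cell h F {i\<in>F. x \<in> pos_side (h i)}"
  unfolding mem_sign_cell pos_side_def hplane_def by (fastforce simp: not_less_iff_gr_or_eq)

lemma sign_cell_Int_hplane:
  assumes "i \<in> F"
  shows "sign_cell h F T \<inter> hplane (h i) = {}"
proof -
  have "fst (h i) \<bullet> x \<noteq> snd (h i)" if "x \<in> sign_cell h F T" for x
    using that assms unfolding mem_sign_cell by (cases "i \<in> T") fastforce+
  then show ?thesis by (auto simp: hplane_def)
qed

lemma realized_patterns_mono: "K \<subseteq> K' \<Longrightarrow> realized_patterns h K F \<subseteq> realized_patterns h K' F"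
  unfolding realized_patterns_def by auto

lemma finite_realized_patterns: "finite F \<Longrightarrow> finite (realized_patterns h K F)"
  by (rule finite_subset[of _ "Pow F"]) (auto simp: realized_patterns_def)

lemma realized_patterns_insert:
  assumes "j \<notin> F"
  shows "realized_patterns h K (insert j F) =
    realized_patterns h (K \<inter> neg_side (h j)) F \<union> insert j ` realized_patterns h (K \<inter> pos_side (h j)) F"
proof -
  have cell: "sign_cell h F (T - {j}) = sign_cell h F T" "sign_cell h F (insert j T) = sign_cell h F T" for T
    using assms by (auto intro!: sign_cell_cong)
  show ?thesis
  proof (intro equalityI subsetI)
    fix T assume "T \<in> realized_patterns h K (insert j F)"
    then show "T \<in> realized_patterns h (K \<inter> neg_side (h j)) F \<union> insert j ` realized_patterns h (K \<inter> pos_side (h j)) F"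
      using cell[of T] unfolding realized_patterns_def sign_cell_insert
      by (cases "j \<in> T") (auto intro!: image_eqI[of T _ "T - {j}"] simp: Int_ac)
  next
    fix T assume "T \<in> realized_patterns h (K \<inter> neg_side (h j)) F \<union> insert j ` realized_patterns h (K \<inter> pos_side (h j)) F"
    then show "T \<in> realized_patterns h K (insert j F)"
      using assms cell unfolding realized_patterns_def sign_cell_insert by (auto simp: Int_ac)
  qed
qed

lemma hplane_perturb:
  fixes x y :: "'a::euclidean_space"
  assumes W: "open W" "x \<in> W" and L: "affine L" "x \<in> L" "y \<in> L"
    and x: "x \<in> hplane h" and y: "y \<notin> hplane h"
  shows "W \<inter> L \<inter> neg_side h \<noteq> {}" and "W \<inter> L \<inter> pos_side h \<noteq> {}"
proof -
  define v where "v = y - x"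
  define c where "c = fst h \<bullet> v"
  have "c \<noteq> 0" using x y by (simp add: c_def v_def hplane_def inner_diff_right)
  have "((\<lambda>t. x + t *\<^sub>R v) \<longlongrightarrow> x + 0 *\<^sub>R v) (at 0)" by (intro tendsto_intros)
  then have "eventually (\<lambda>t. x + t *\<^sub>R v \<in> W) (at 0)"
    using W by (auto dest: topological_tendstoD)
  then obtain e where "e > 0" and e: "\<And>t. t \<noteq> 0 \<Longrightarrow> dist t 0 < e \<Longrightarrow> x + t *\<^sub>R v \<in> W"
    unfolding eventually_at by auto
  have line: "x + t *\<^sub>R v \<in> L" for t
  proof -
    have "x + t *\<^sub>R v = (1 - t) *\<^sub>R x + t *\<^sub>R y" by (simp add: v_def algebra_simps)
    then show ?thesis using L unfolding affine_def by simp
  qed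
  have side: "fst h \<bullet> (x + t *\<^sub>R v) = snd h + t * c" for t
    using x by (simp add: hplane_def c_def inner_add_right)
  define t where "t = (if 0 < c then e / 2 else - e / 2)"
  have t: "t \<noteq> 0" "dist t 0 < e" "dist (- t) 0 < e" "0 < t * c"
    using \<open>e > 0\<close> \<open>c \<noteq> 0\<close> by (auto simp: t_def mult_pos_neg)
  show "W \<inter> L \<inter> neg_side h \<noteq> {}"
    using e[of "- t"] line[of "- t"] side[of "- t"] t by (auto simp: neg_side_def)
  show "W \<inter> L \<inter> pos_side h \<noteq> {}"
    using e[of t] line[of t] side[of t] t by (auto simp: pos_side_def)
qed

lemma realized_patterns_split:
  assumes "open U" "affine L" "finite F" "y \<in> L" "y \<notin> hplane (h j)"
  shows "realized_patterns h (U \<inter> L) F =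
    realized_patterns h (U \<inter> L \<inter> neg_side (h j)) F \<union> realized_patterns h (U \<inter> L \<inter> pos_side (h j)) F"
proof (rule equalityI, rule subsetI)
  fix T assume "T \<in> realized_patterns h (U \<inter> L) F"
  then obtain x where T: "T \<subseteq> F" and x: "x \<in> U \<inter> sign_cell h F T" "x \<in> L"
    by (auto simp: realized_patterns_def)
  have "open (U \<inter> sign_cell h F T)" using assms by (simp add: open_sign_cell open_Int)
  then have "U \<inter> sign_cell h F T \<inter> L \<inter> pos_side (h j) \<noteq> {}" if "x \<in> hplane (h j)"
    using hplane_perturb(2) x assms(2,4,5) that by blast
  then have "x \<in> neg_side (h j) \<or> U \<inter> sign_cell h F T \<inter> L \<inter> pos_side (h j) \<noteq> {}"
    using x by (auto simp: neg_side_def pos_side_def hplane_def not_less_iff_gr_or_eq)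
  then show "T \<in> realized_patterns h (U \<inter> L \<inter> neg_side (h j)) F \<union> realized_patterns h (U \<inter> L \<inter> pos_side (h j)) F"
    using T x unfolding realized_patterns_def by blast
qed (intro Un_least realized_patterns_mono Int_lower1)

lemma realized_patterns_crossing:
  assumes "convex K"
  shows "realized_patterns h (K \<inter> neg_side (h j)) F \<inter> realized_patterns h (K \<inter> pos_side (h j)) F
    \<subseteq> realized_patterns h (K \<inter> hplane (h j)) F"
proof
  fix T assume "T \<in> realized_patterns h (K \<inter> neg_side (h j)) F \<inter> realized_patterns h (K \<inter> pos_side (h j)) F"
  then obtain p q where T: "T \<subseteq> F" and pq: "p \<in> K \<inter> sign_cell h F T" "q \<in> K \<inter> sign_cell h F T"
    and "fst (h j) \<bullet> p < snd (h j)" "snd (h j) < fst (h j) \<bullet> q"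
    by (auto simp: realized_patterns_def neg_side_def pos_side_def)
  then obtain z where "z \<in> K \<inter> sign_cell h F T" "fst (h j) \<bullet> z = snd (h j)"
    using connected_ivt_hyperplane[OF convex_connected[OF convex_Int[OF assms convex_sign_cell]] pq]
    by (metis less_eq_real_def)
  then show "T \<in> realized_patterns h (K \<inter> hplane (h j)) F"
    using T by (auto simp: realized_patterns_def hplane_def)
qed

lemma realized_patterns_both_sides:
  assumes "open U" "convex U" "affine L" "finite F" "y \<in> L" "y \<notin> hplane (h j)"
  shows "realized_patterns h (U \<inter> L \<inter> neg_side (h j)) F \<inter> realized_patterns h (U \<inter> L \<inter> pos_side (h j)) F
    = realized_patterns h (U \<inter> L \<inter> hplane (h j)) F"
proof
  have "convex (U \<inter> L)" using assms by (simp add: convex_Int affine_imp_convex)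
  then show "realized_patterns h (U \<inter> L \<inter> neg_side (h j)) F \<inter> realized_patterns h (U \<inter> L \<inter> pos_side (h j)) F
    \<subseteq> realized_patterns h (U \<inter> L \<inter> hplane (h j)) F"
    by (rule realized_patterns_crossing)
  show "realized_patterns h (U \<inter> L \<inter> hplane (h j)) F
    \<subseteq> realized_patterns h (U \<inter> L \<inter> neg_side (h j)) F \<inter> realized_patterns h (U \<inter> L \<inter> pos_side (h j)) F"
  proof
    fix T assume "T \<in> realized_patterns h (U \<inter> L \<inter> hplane (h j)) F"
    then obtain x where T: "T \<subseteq> F" and x: "x \<in> U \<inter> sign_cell h F T" "x \<in> L" "x \<in> hplane (h j)"
      by (auto simp: realized_patterns_def)
    have "open (U \<inter> sign_cell h F T)" using assms by (simp add: open_sign_cell open_Int)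
    from hplane_perturb[OF this x(1) assms(3) x(2) assms(5) x(3) assms(6)] T
    show "T \<in> realized_patterns h (U \<inter> L \<inter> neg_side (h j)) F \<inter> realized_patterns h (U \<inter> L \<inter> pos_side (h j)) F"
      unfolding realized_patterns_def by blast
  qed
qed

lemma card_realized_patterns_insert:
  assumes "open U" "convex U" "affine L" "finite F" "j \<notin> F" "y \<in> L" "y \<notin> hplane (h j)"
  shows "card (realized_patterns h (U \<inter> L) (insert j F)) =
    card (realized_patterns h (U \<inter> L) F) + card (realized_patterns h (U \<inter> L \<inter> hplane (h j)) F)"
proof -
  let ?N = "realized_patterns h (U \<inter> L \<inter> neg_side (h j)) F"
  let ?P = "realized_patterns h (U \<inter> L \<inter> pos_side (h j)) F"
  have fin: "finite ?N" "finite ?P" using assms(4) by (simp_all add: finite_realized_patterns)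
  have "?N \<union> ?P \<subseteq> Pow F" by (auto simp: realized_patterns_def)
  then have "j \<notin> T" if "T \<in> ?N \<union> ?P" for T
    using assms(5) that by blast
  then have "inj_on (insert j) ?P" "?N \<inter> insert j ` ?P = {}"
    by (auto simp: inj_on_def insert_ident)
  then have "card (realized_patterns h (U \<inter> L) (insert j F)) = card ?N + card ?P"
    using fin by (simp add: realized_patterns_insert[OF assms(5)] card_Un_disjoint card_image)
  also have "\<dots> = card (?N \<union> ?P) + card (?N \<inter> ?P)"
    using fin by (rule card_Un_Int)
  also have "\<dots> = card (realized_patterns h (U \<inter> L) F) + card (realized_patterns h (U \<inter> L \<inter> hplane (h j)) F)"
    using realized_patterns_split[of U L F y h j] realized_patterns_both_sides[of U L F y h j] assms by simp
  finally show ?thesis .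
qed

lemma sum_choose_Suc:
  "(\<Sum>i\<le>Suc d. Suc m choose i) = (\<Sum>i\<le>Suc d. m choose i) + (\<Sum>i\<le>d. m choose i)"
proof -
  have "(\<Sum>i\<le>Suc d. Suc m choose i) = 1 + (\<Sum>i\<le>d. m choose i) + (\<Sum>i\<le>d. m choose Suc i)"
    by (subst sum.atMost_Suc_shift) (simp add: sum.distrib)
  moreover have "(\<Sum>i\<le>Suc d. m choose i) = 1 + (\<Sum>i\<le>d. m choose Suc i)"
    by (subst sum.atMost_Suc_shift) simp
  ultimately show ?thesis by simp
qed

definition flat :: "(nat \<Rightarrow> 'a::euclidean_space \<times> real) \<Rightarrow> nat set \<Rightarrow> 'a set" where
  "flat h I = (\<Inter>i\<in>I. hplane (h i))"

text \<open>The last clause keeps \<open>L\<close> and its intersections with fewer than \<open>d\<close> hyperplanes out of every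
  further hyperplane, which is what allows points on a hyperplane to be pushed to either side.\<close>

definition simple_arrangement_on ::
    "(nat \<Rightarrow> 'a::euclidean_space \<times> real) \<Rightarrow> 'a set \<Rightarrow> 'a set \<Rightarrow> nat set \<Rightarrow> nat \<Rightarrow> bool" where
  "simple_arrangement_on h U L N d \<longleftrightarrow>
    (\<forall>I\<subseteq>N. card I \<le> d \<longrightarrow> U \<inter> L \<inter> flat h I \<noteq> {}) \<and>
    (\<forall>I\<subseteq>N. card I = Suc d \<longrightarrow> U \<inter> L \<inter> flat h I = {}) \<and>
    (\<forall>I\<subseteq>N. \<forall>j\<in>N - I. card I < d \<longrightarrow> \<not> L \<inter> flat h I \<subseteq> hplane (h j))"

lemma simple_arrangement_onD:
  assumes "simple_arrangement_on h U L N d" "I \<subseteq> N"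
  shows "card I \<le> d \<Longrightarrow> U \<inter> L \<inter> flat h I \<noteq> {}"
    and "card I = Suc d \<Longrightarrow> U \<inter> L \<inter> flat h I = {}"
    and "j \<in> N - I \<Longrightarrow> card I < d \<Longrightarrow> \<not> L \<inter> flat h I \<subseteq> hplane (h j)"
  using assms unfolding simple_arrangement_on_def by auto

lemma flat_insert: "flat h (insert j I) = hplane (h j) \<inter> flat h I"
  by (simp add: flat_def)

lemma affine_flat: "affine (flat h I)"
  unfolding flat_def hplane_def by (intro affine_Inter) (auto simp: affine_hyperplane)

lemma simple_arrangement_on_subset:
  "simple_arrangement_on h U L N d \<Longrightarrow> N' \<subseteq> N \<Longrightarrow> simple_arrangement_on h U L N' d"
  unfolding simple_arrangement_on_def by (meson Diff_iff subset_iff subset_trans)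

lemma simple_arrangement_on_restrict:
  assumes "finite F" "j \<notin> F" and simple: "simple_arrangement_on h U L (insert j F) (Suc d)"
  shows "simple_arrangement_on h U (L \<inter> hplane (h j)) F d"
  unfolding simple_arrangement_on_def
proof (intro conjI allI impI ballI)
  fix I assume "I \<subseteq> F"
  then have "j \<notin> I" "finite I" using assms(1,2) finite_subset by auto
  then have I: "card (insert j I) = Suc (card I)" "insert j I \<subseteq> insert j F"
    "U \<inter> (L \<inter> hplane (h j)) \<inter> flat h I = U \<inter> L \<inter> flat h (insert j I)"
    "L \<inter> hplane (h j) \<inter> flat h I = L \<inter> flat h (insert j I)"
    using \<open>I \<subseteq> F\<close> by (auto simp: flat_insert)
  show "U \<inter> (L \<inter> hplane (h j)) \<inter> flat h I \<noteq> {}" if "card I \<le> d"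
    using simple I that unfolding simple_arrangement_on_def by simp
  show "U \<inter> (L \<inter> hplane (h j)) \<inter> flat h I = {}" if "card I = Suc d"
    using simple I that unfolding simple_arrangement_on_def by simp
  show "\<not> L \<inter> hplane (h j) \<inter> flat h I \<subseteq> hplane (h i)" if "i \<in> F - I" "card I < d" for i
    using simple I that assms(2) unfolding simple_arrangement_on_def by auto
qed

lemma simple_arrangement_on_off_hplane:
  assumes "simple_arrangement_on h U L N d" "j \<in> N"
  obtains y where "y \<in> L" "y \<notin> hplane (h j)"
proof (cases d)
  case 0
  then have "U \<inter> L \<inter> flat h {} \<noteq> {}" "U \<inter> L \<inter> flat h {j} = {}"
    using simple_arrangement_onD(1,2)[OF assms(1)] assms(2) by auto
  then show ?thesis using that by (auto simp: flat_def)
next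
  case (Suc d')
  then have "\<not> L \<inter> flat h {} \<subseteq> hplane (h j)"
    using simple_arrangement_onD(3)[OF assms(1)] assms(2) by auto
  then show ?thesis using that by (auto simp: flat_def)
qed

lemma card_realized_patterns_simple:
  assumes "open U" "convex U" "finite N"
  shows "affine L \<Longrightarrow> simple_arrangement_on h U L N d \<Longrightarrow>
    card (realized_patterns h (U \<inter> L) N) = (\<Sum>i\<le>d. card N choose i)"
  using assms(3)
proof (induction N arbitrary: L d rule: finite_induct)
  case empty
  then have "U \<inter> L \<noteq> {}" using simple_arrangement_onD(1)[OF empty(2)] by (simp add: flat_def)
  then have "realized_patterns h (U \<inter> L) {} = {{}}" by (auto simp: realized_patterns_def sign_cell_def)
  moreover have "(\<Sum>i\<le>d. (0::nat) choose i) = 1" by (induction d) auto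
  ultimately show ?case by simp
next
  case (insert j F)
  obtain y where y: "y \<in> L" "y \<notin> hplane (h j)"
    using simple_arrangement_on_off_hplane[OF insert.prems(2)] by blast
  have step: "card (realized_patterns h (U \<inter> L) (insert j F)) =
      (\<Sum>i\<le>d. card F choose i) + card (realized_patterns h (U \<inter> L \<inter> hplane (h j)) F)"
    using card_realized_patterns_insert[where h = h, OF assms(1,2) insert.prems(1) insert.hyps y]
      insert.IH[OF insert.prems(1) simple_arrangement_on_subset[OF insert.prems(2) subset_insertI]] by simp
  have card_insert: "card (insert j F) = Suc (card F)" using insert.hyps by simp
  show ?case
  proof (cases d)
    case 0
    then have "U \<inter> L \<inter> flat h {j} = {}"
      using simple_arrangement_onD(2)[OF insert.prems(2)] by simp
    then have "realized_patterns h (U \<inter> L \<inter> hplane (h j)) F = {}"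
      by (simp add: realized_patterns_def flat_def)
    with step 0 show ?thesis by simp
  next
    case (Suc d')
    have "affine (L \<inter> hplane (h j))"
      using insert.prems(1) by (simp add: affine_Int hplane_def affine_hyperplane)
    moreover have "simple_arrangement_on h U (L \<inter> hplane (h j)) F d'"
      using simple_arrangement_on_restrict[OF insert.hyps] insert.prems(2) Suc by simp
    ultimately have "card (realized_patterns h (U \<inter> L \<inter> hplane (h j)) F) = (\<Sum>i\<le>d'. card F choose i)"
      using insert.IH by (simp add: Int_assoc)
    with step show ?thesis
      unfolding Suc card_insert sum_choose_Suc by linarith
  qed
qed

lemma aff_dim_flat_ge:
  fixes h :: "nat \<Rightarrow> 'a::euclidean_space \<times> real"
  assumes "finite I" "flat h I \<noteq> {}"
  shows "int DIM('a) - int (card I) \<le> aff_dim (flat h I)"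
  using assms
proof (induction I rule: finite_induct)
  case empty
  then show ?case by (simp add: flat_def)
next
  case (insert j I)
  have eq: "flat h (insert j I) = flat h I \<inter> {x. fst (h j) \<bullet> x = snd (h j)}"
    by (auto simp: flat_insert hplane_def)
  then have "aff_dim (flat h I) - 1 \<le> aff_dim (flat h (insert j I))"
    using aff_dim_affine_Int_hyperplane[OF affine_flat, of h I "fst (h j)" "snd (h j)"] insert.prems
    by auto
  moreover have "int DIM('a) - int (card I) \<le> aff_dim (flat h I)"
    using insert.IH insert.prems by (auto simp: flat_insert)
  ultimately show ?case using insert.hyps by simp
qed

lemma affine_eq_if_Int_open_eq:
  fixes A B :: "'a::euclidean_space set"
  assumes "affine A" "affine B" "open U" "A \<inter> U = B \<inter> U" "A \<inter> U \<noteq> {}"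
  shows "A = B"
  using affine_hull_affine_Int_open[of A U] affine_hull_affine_Int_open[of B U] assms
  by (metis affine_hull_eq)

lemma simple_hyp_arrangementD:
  fixes h :: "nat \<Rightarrow> 'a::euclidean_space \<times> real"
  assumes "simple_hyp_arrangement d n h"
  shows "i < n \<Longrightarrow> fst (h i) \<noteq> 0"
    and "S \<subseteq> {..<n} \<Longrightarrow> card S = d \<Longrightarrow> hyperbolic_plane (int DIM('a) - int d) (flat h S \<inter> klein)"
    and "S \<subseteq> {..<n} \<Longrightarrow> card S = Suc d \<Longrightarrow> flat h S \<inter> klein = {}"
  using assms unfolding simple_hyp_arrangement_def hyp_hyperplane_def flat_def by auto

lemma flat_not_subset_hplane:
  fixes h :: "nat \<Rightarrow> 'a::euclidean_space \<times> real"
  assumes simple: "simple_hyp_arrangement d n h" and S: "S \<subseteq> {..<n}" "card S = d"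
    and "I \<subseteq> S" "j \<in> S - I"
  shows "\<not> flat h I \<subseteq> hplane (h j)"
proof
  assume "flat h I \<subseteq> hplane (h j)"
  moreover have "flat h (S - {j}) \<subseteq> flat h I" using assms(4,5) by (auto simp: flat_def)
  moreover have "flat h S = hplane (h j) \<inter> flat h (S - {j})"
    using flat_insert[of h j "S - {j}"] assms(5) by (simp add: insert_absorb)
  ultimately have eq: "flat h S = flat h (S - {j})" by blast
  obtain A where A: "affine A" "aff_dim A = int DIM('a) - int d" "flat h S \<inter> klein = A \<inter> klein"
    "flat h S \<inter> klein \<noteq> {}"
    using simple_hyp_arrangementD(2)[OF simple S] unfolding hyperbolic_plane_def by blast
  then have "flat h S = A"
    using affine_eq_if_Int_open_eq[OF affine_flat A(1), of klein] A(3,4) by (simp add: klein_def)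
  moreover have "finite S" using S(1) finite_subset by blast
  then have "int DIM('a) - int (card (S - {j})) \<le> aff_dim (flat h (S - {j}))"
    using A(4) eq by (intro aff_dim_flat_ge) auto
  moreover have "card (S - {j}) = d - 1" "d \<ge> 1"
    using S(2) assms(5) \<open>finite S\<close> by (auto simp: Suc_le_eq card_gt_0_iff)
  ultimately show False using A(2) eq by simp
qed

lemma simple_arrangement_on_klein:
  assumes simple: "simple_hyp_arrangement d n h" and N: "N \<subseteq> {..<n}" "d \<le> card N"
  shows "simple_arrangement_on h klein UNIV N d"
  unfolding simple_arrangement_on_def
proof (intro conjI allI impI ballI)
  fix I assume I: "I \<subseteq> N"
  have "finite N" using N(1) finite_subset by blast
  show "klein \<inter> UNIV \<inter> flat h I \<noteq> {}" if small: "card I \<le> d"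
  proof -
    obtain J where J: "I \<subseteq> J" "J \<subseteq> N" "card J = d"
      using exists_subset_between[OF small N(2) I \<open>finite N\<close>] by blast
    moreover have "flat h J \<inter> klein \<noteq> {}"
      using simple_hyp_arrangementD(2)[OF simple, of J] J N(1) unfolding hyperbolic_plane_def by auto
    ultimately show ?thesis unfolding flat_def by blast
  qed
  show "klein \<inter> UNIV \<inter> flat h I = {}" if "card I = Suc d"
    using simple_hyp_arrangementD(3)[OF simple, of I] I N(1) that by auto
  show "\<not> UNIV \<inter> flat h I \<subseteq> hplane (h j)" if "j \<in> N - I" "card I < d" for j
  proof -
    have "finite I" using I \<open>finite N\<close> finite_subset by blast
    then have "card (insert j I) \<le> d" "insert j I \<subseteq> N" using that I by auto
    then obtain J where J: "insert j I \<subseteq> J" "J \<subseteq> N" "card J = d"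
      using exists_subset_between[OF _ N(2) _ \<open>finite N\<close>] by blast
    then show ?thesis
      using flat_not_subset_hplane[OF simple, of J I j] N(1) that by auto
  qed
qed

lemma connected_subset_pos_side_iff:
  assumes "connected C" "C \<inter> hplane h = {}" "x \<in> C"
  shows "C \<subseteq> pos_side h \<longleftrightarrow> x \<in> pos_side h"
proof
  assume x: "x \<in> pos_side h"
  show "C \<subseteq> pos_side h"
  proof
    fix y assume y: "y \<in> C"
    show "y \<in> pos_side h"
    proof (rule ccontr)
      assume "y \<notin> pos_side h"
      then obtain z where "z \<in> C" "fst h \<bullet> z = snd h"
        using connected_ivt_hyperplane[OF assms(1) y assms(3), of "fst h" "snd h"] x
        by (auto simp: pos_side_def)
      then show False using assms(2) by (auto simp: hplane_def)
    qed
  qed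
qed (use assms(3) in blast)

lemma concept_class_eq_realized_patterns:
  "concept_class n h = realized_patterns h klein {..<n}"
proof -
  define V where "V = klein - (\<Union>i<n. hplane (h i))"
  let ?pattern = "\<lambda>x. {i\<in>{..<n}. x \<in> pos_side (h i)}"
  have pattern: "cell_concept n h (connected_component_set V x) = ?pattern x" if "x \<in> V" for x
  proof -
    have disj: "connected_component_set V x \<inter> hplane (h i) = {}" if "i < n" for i
      using connected_component_subset[of V x] that by (auto simp: V_def)
    have "x \<in> connected_component_set V x" using \<open>x \<in> V\<close> by simp
    then have "connected_component_set V x \<subseteq> pos_side (h i) \<longleftrightarrow> x \<in> pos_side (h i)" if "i < n" for i
      using connected_subset_pos_side_iff[OF connected_connected_component disj[OF that]] by simp
    then show ?thesis by (auto simp: cell_concept_def)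
  qed
  have "concept_class n h = cell_concept n h ` connected_component_set V ` V"
    by (simp add: concept_class_def cells_def components_def V_def)
  also have "\<dots> = ?pattern ` V"
    using pattern by (simp add: image_image cong: image_cong)
  also have "\<dots> = realized_patterns h klein {..<n}"
  proof (intro equalityI subsetI)
    fix T assume "T \<in> ?pattern ` V"
    then obtain x where "x \<in> V" "T = ?pattern x" by blast
    moreover have "x \<in> sign_cell h {..<n} (?pattern x)"
      using \<open>x \<in> V\<close> by (intro mem_sign_cell_pattern) (auto simp: V_def)
    ultimately show "T \<in> realized_patterns h klein {..<n}"
      by (auto simp: realized_patterns_def V_def)
  next
    fix T assume "T \<in> realized_patterns h klein {..<n}"
    then obtain x where T: "T \<subseteq> {..<n}" and x: "x \<in> klein" "x \<in> sign_cell h {..<n} T"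
      by (auto simp: realized_patterns_def)
    then have "x \<in> V" using sign_cell_Int_hplane[of _ "{..<n}" h T] by (auto simp: V_def)
    moreover have "T = ?pattern x" using sign_cell_pattern[OF x(2)] T by (simp add: Int_absorb2)
    ultimately show "T \<in> ?pattern ` V" by blast
  qed
  finally show ?thesis .
qed

lemma realized_patterns_restrict:
  assumes "open U" "finite G" "F \<subseteq> G" and normals: "\<And>i. i \<in> G \<Longrightarrow> fst (h i) \<noteq> 0"
  shows "(\<lambda>T. T \<inter> F) ` realized_patterns h U G = realized_patterns h U F"
proof (intro equalityI subsetI)
  fix T' assume "T' \<in> (\<lambda>T. T \<inter> F) ` realized_patterns h U G"
  then obtain T x where "T' = T \<inter> F" "x \<in> U" "x \<in> sign_cell h G T"
    by (auto simp: realized_patterns_def)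
  moreover have "sign_cell h F T = sign_cell h F (T \<inter> F)" by (rule sign_cell_cong) auto
  then have "sign_cell h G T \<subseteq> sign_cell h F (T \<inter> F)"
    using sign_cell_antimono[OF assms(3)] by metis
  ultimately show "T' \<in> realized_patterns h U F" by (auto simp: realized_patterns_def)
next
  fix T assume "T \<in> realized_patterns h U F"
  then have T: "T \<subseteq> F" and "U \<inter> sign_cell h F T \<noteq> {}" by (auto simp: realized_patterns_def)
  then have "\<not> negligible (U \<inter> sign_cell h F T)"
    using assms(1,2,3) finite_subset by (intro open_not_negligible open_Int open_sign_cell) auto
  moreover have "negligible (\<Union>i\<in>G. hplane (h i))"
    using assms(2) normals by (intro negligible_Union) (auto simp: hplane_def negligible_hyperplane)
  ultimately obtain y where y: "y \<in> U \<inter> sign_cell h F T" "y \<notin> (\<Union>i\<in>G. hplane (h i))"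
    by (metis negligible_subset subsetI)
  define T' where "T' = {i\<in>G. y \<in> pos_side (h i)}"
  have "y \<in> sign_cell h G T'" using y(2) unfolding T'_def by (intro mem_sign_cell_pattern) auto
  moreover have "T' \<inter> F = T" using sign_cell_pattern[of y h F T] y(1) T assms(3) by (auto simp: T'_def)
  ultimately show "T \<in> (\<lambda>T. T \<inter> F) ` realized_patterns h U G"
    using y(1) by (auto simp: realized_patterns_def T'_def)
qed

lemma flat_meets_if_all_patterns_realized:
  assumes "convex K" "finite S" "realized_patterns h K S = Pow S"
  shows "K \<inter> flat h S \<noteq> {}"
  using assms(2,1,3)
proof (induction S arbitrary: K rule: finite_induct)
  case empty
  then show ?case by (auto simp: realized_patterns_def sign_cell_def flat_def)
next
  case (insert j F)
  let ?N = "realized_patterns h (K \<inter> neg_side (h j)) F"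
  let ?P = "realized_patterns h (K \<inter> pos_side (h j)) F"
  have all: "?N \<union> insert j ` ?P = Pow (insert j F)"
    using insert.prems(2) realized_patterns_insert[OF insert.hyps(2), of h K] by simp
  have sub: "?N \<union> ?P \<subseteq> Pow F" by (auto simp: realized_patterns_def)
  have "T \<in> ?N \<inter> ?P" if "T \<subseteq> F" for T
  proof -
    have "j \<notin> T" using that insert.hyps(2) by blast
    have "T \<in> ?N \<union> insert j ` ?P" "insert j T \<in> ?N \<union> insert j ` ?P" using all that by auto
    moreover have "T \<notin> insert j ` ?P" using \<open>j \<notin> T\<close> by auto
    moreover have "insert j T \<notin> ?N" using sub insert.hyps(2) by auto
    ultimately obtain T' where "T \<in> ?N" "T' \<in> ?P" "insert j T = insert j T'" by auto
    moreover have "j \<notin> T'" using sub \<open>T' \<in> ?P\<close> insert.hyps(2) by auto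
    ultimately show ?thesis using \<open>j \<notin> T\<close> by (simp add: insert_ident)
  qed
  then have "Pow F \<subseteq> ?N \<inter> ?P" by blast
  also have "\<dots> \<subseteq> realized_patterns h (K \<inter> hplane (h j)) F"
    using insert.prems(1) by (rule realized_patterns_crossing)
  finally have "realized_patterns h (K \<inter> hplane (h j)) F = Pow F"
    by (auto simp: realized_patterns_def)
  with insert.IH[of "K \<inter> hplane (h j)"] insert.prems(1)
  have "K \<inter> hplane (h j) \<inter> flat h F \<noteq> {}"
    by (simp add: convex_Int hplane_def convex_hyperplane)
  then show ?case by (simp add: flat_insert Int_assoc)
qed

lemma shatters_subset:
  assumes "shatters C S" "S' \<subseteq> S"
  shows "shatters C S'"
proof -
  have "S \<inter> S' = S'" using assms(2) by blast
  then have "(\<lambda>c. c \<inter> S') ` C = (\<lambda>X. X \<inter> S') ` (\<lambda>c. c \<inter> S) ` C"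
    by (simp add: image_image Int_assoc)
  also have "\<dots> = (\<lambda>X. X \<inter> S') ` Pow S" using assms(1) by (simp add: shatters_def)
  also have "\<dots> = Pow S'"
  proof
    show "Pow S' \<subseteq> (\<lambda>X. X \<inter> S') ` Pow S"
    proof
      fix Y assume "Y \<in> Pow S'"
      then have "Y = Y \<inter> S'" "Y \<in> Pow S" using assms(2) by blast+
      then show "Y \<in> (\<lambda>X. X \<inter> S') ` Pow S" by blast
    qed
  qed blast
  finally show ?thesis by (simp add: shatters_def)
qed

lemma shatters_concept_class_iff:
  assumes "S \<subseteq> {..<n}" "\<And>i. i < n \<Longrightarrow> fst (h i) \<noteq> 0"
  shows "shatters (concept_class n h) S \<longleftrightarrow> realized_patterns h klein S = Pow S"
  using realized_patterns_restrict[of klein "{..<n}" S h] assms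
  by (simp add: shatters_def concept_class_eq_realized_patterns klein_def)

lemma card_concept_class:
  assumes "simple_hyp_arrangement d n h" "d \<le> n"
  shows "card (concept_class n h) = (\<Sum>i\<le>d. n choose i)"
  using card_realized_patterns_simple[OF _ _ finite_lessThan affine_UNIV
      simple_arrangement_on_klein[OF assms(1) subset_refl]] assms(2)
  by (simp add: concept_class_eq_realized_patterns klein_def)

lemma shatters_concept_class:
  assumes simple: "simple_hyp_arrangement d n h" and S: "S \<subseteq> {..<n}" "card S = d"
  shows "shatters (concept_class n h) S"
proof -
  have "finite S" using S(1) finite_subset by blast
  have "card (realized_patterns h klein S) = (\<Sum>i\<le>d. card S choose i)"
    using card_realized_patterns_simple[OF _ _ \<open>finite S\<close> affine_UNIV
        simple_arrangement_on_klein[OF simple S(1)]] S(2)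
    by (simp add: klein_def)
  then have "card (realized_patterns h klein S) = card (Pow S)"
    using S(2) \<open>finite S\<close> by (simp add: choose_row_sum card_Pow)
  moreover have "realized_patterns h klein S \<subseteq> Pow S" by (auto simp: realized_patterns_def)
  ultimately have "realized_patterns h klein S = Pow S"
    using \<open>finite S\<close> by (simp add: card_subset_eq)
  then show ?thesis
    using shatters_concept_class_iff[OF S(1) simple_hyp_arrangementD(1)[OF simple]] by simp
qed

lemma shatters_concept_class_card_le:
  assumes simple: "simple_hyp_arrangement d n h" and S: "S \<subseteq> {..<n}" "shatters (concept_class n h) S"
  shows "card S \<le> d"
proof (rule ccontr)
  assume "\<not> card S \<le> d"
  then obtain S' where S': "S' \<subseteq> S" "card S' = Suc d" "finite S'"
    by (meson not_less_eq_eq obtain_subset_with_card_n)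
  then have "realized_patterns h klein S' = Pow S'"
    using shatters_subset[OF S(2)] shatters_concept_class_iff simple_hyp_arrangementD(1)[OF simple] S(1)
    by (meson subset_trans)
  then have "klein \<inter> flat h S' \<noteq> {}"
    using flat_meets_if_all_patterns_realized[of klein S' h] S'(3) by (simp add: klein_def)
  moreover have "flat h S' \<inter> klein = {}"
    using simple_hyp_arrangementD(3)[OF simple] S S' by blast
  ultimately show False by blast
qed

theorem corollary5:
  fixes h :: "nat \<Rightarrow> 'a::euclidean_space \<times> real"
    and n d :: nat
  assumes "simple_hyp_arrangement d n h"
    and "d \<le> n"
  shows "maximum_class n (concept_class n h) d"
proof -
  obtain S where "S \<subseteq> {..<n}" "card S = d"
    using obtain_subset_with_card_n[of d "{..<n}"] assms(2) by auto
  then have "\<exists>S. S \<subseteq> {..<n} \<and> card S = d \<and> shatters (concept_class n h) S"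
    using shatters_concept_class[OF assms(1)] by blast
  moreover have "concept_class n h \<subseteq> Pow {..<n}"
    by (auto simp: concept_class_def cell_concept_def)
  ultimately show ?thesis
    using card_concept_class[OF assms] shatters_concept_class_card_le[OF assms(1)]
    unfolding maximum_class_def has_VC_dim_def by blast
qed

end
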